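(* Let $\mathcal{H}$ be a Hilbert space. Every power bounded operator $T\in\mathcal{B}(\mathcal{H})$ (i.e. $\sup_{n\ge0}\|T^n\|<\infty$) has a $3$-isometric lifting, which can be chosen to be expansive and analytic.
   Context: If $\mathcal{H}$ is a closed subspace of a Hilbert space $\mathcal{K}$ with orthogonal projection $P_{\mathcal{H}}$, an operator $S\in\mathcal{B}(\mathcal{K})$ is a lifting of $T\in\mathcal{B}(\mathcal{H})$ if $TP_{\mathcal{H}}=P_{\mathcal{H}}S$ (up to unitary identification of $\mathcal{H}$ with a subspace of $\mathcal{K}$). $S$ is $3$-isometric if $\sum_{j=0}^3 (-1)^j\binom{3}{j} S^{*j}S^j=0$. $S\in\mathcal{B}(\mathcal{K})$ is expansive if $\|Sx\|\ge\|x\|$ for all $x$, and analytic if $\bigcap_{n\ge0}S^n(\mathcal{K})=\{0\}$. *)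

theory Defs
  imports "HOL-Analysis.Analysis"
begin

text \<open>A complex Hilbert space is modelled as a real Hilbert space (type class
  real_inner + complete_space) together with a complex structure J (multiplication
  by the imaginary unit): a bounded real-linear isometry with J (J x) = - x.
  The real inner product is the real part of the complex one.\<close>

definition complex_structure :: "('a::real_inner \<Rightarrow> 'a) \<Rightarrow> bool" where
  "complex_structure J \<longleftrightarrow> bounded_linear J \<and> (\<forall>x. J (J x) = - x) \<and> (\<forall>x. norm (J x) = norm x)"

definition complex_bounded_operator :: "('a::real_inner \<Rightarrow> 'a) \<Rightarrow> ('a \<Rightarrow> 'a) \<Rightarrow> bool" where
  "complex_bounded_operator J T \<longleftrightarrow> bounded_linear T \<and> (\<forall>x. T (J x) = J (T x))"

definition power_bounded :: "('a::real_normed_vector \<Rightarrow> 'a) \<Rightarrow> bool" where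
  "power_bounded T \<longleftrightarrow> bdd_above (range (\<lambda>n. onorm (T ^^ n)))"

definition l2seq :: "(nat \<Rightarrow> 'a::real_inner) set" where
  "l2seq = {f. summable (\<lambda>n. (norm (f n))\<^sup>2)}"

definition l2inner :: "(nat \<Rightarrow> 'a::real_inner) \<Rightarrow> (nat \<Rightarrow> 'a) \<Rightarrow> real" where
  "l2inner f g = (\<Sum>n. inner (f n) (g n))"

definition l2norm :: "(nat \<Rightarrow> 'a::real_inner) \<Rightarrow> real" where
  "l2norm f = sqrt (l2inner f f)"

definition l2J :: "('a \<Rightarrow> 'a) \<Rightarrow> (nat \<Rightarrow> 'a) \<Rightarrow> (nat \<Rightarrow> 'a)" where
  "l2J J f = (\<lambda>n. J (f n))"

definition l2_operator :: "('a::real_inner \<Rightarrow> 'a) \<Rightarrow> ((nat \<Rightarrow> 'a) \<Rightarrow> (nat \<Rightarrow> 'a)) \<Rightarrow> bool" where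
  "l2_operator J S \<longleftrightarrow>
     S ` l2seq \<subseteq> l2seq \<and>
     (\<forall>x\<in>l2seq. \<forall>y\<in>l2seq. S (\<lambda>n. x n + y n) = (\<lambda>n. S x n + S y n)) \<and>
     (\<forall>x\<in>l2seq. \<forall>r::real. S (\<lambda>n. r *\<^sub>R x n) = (\<lambda>n. r *\<^sub>R S x n)) \<and>
     (\<forall>x\<in>l2seq. S (l2J J x) = l2J J (S x)) \<and>
     (\<exists>C. \<forall>x\<in>l2seq. l2norm (S x) \<le> C * l2norm x)"

text \<open>Hilbert-space adjoint of an operator on l^2(N; H) (meaningful on l2seq).\<close>

definition l2adj :: "((nat \<Rightarrow> 'a::real_inner) \<Rightarrow> (nat \<Rightarrow> 'a)) \<Rightarrow> (nat \<Rightarrow> 'a) \<Rightarrow> (nat \<Rightarrow> 'a)" where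
  "l2adj S y = (THE z. z \<in> l2seq \<and> (\<forall>x\<in>l2seq. l2inner (S x) y = l2inner x z))"

definition l2proj :: "(nat \<Rightarrow> 'a::real_inner) set \<Rightarrow> (nat \<Rightarrow> 'a) \<Rightarrow> (nat \<Rightarrow> 'a)" where
  "l2proj M k = (THE p. p \<in> M \<and> (\<forall>m\<in>M. l2inner (\<lambda>n. k n - p n) m = 0))"

definition three_isometric :: "((nat \<Rightarrow> 'a::real_inner) \<Rightarrow> (nat \<Rightarrow> 'a)) \<Rightarrow> bool" where
  "three_isometric S \<longleftrightarrow>
     (\<forall>x\<in>l2seq. (\<lambda>n. \<Sum>j\<le>3. ((-1) ^ j * real (3 choose j)) *\<^sub>R (((l2adj S) ^^ j) ((S ^^ j) x)) n) = (\<lambda>n. 0))"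

definition l2_expansive :: "((nat \<Rightarrow> 'a::real_inner) \<Rightarrow> (nat \<Rightarrow> 'a)) \<Rightarrow> bool" where
  "l2_expansive S \<longleftrightarrow> (\<forall>x\<in>l2seq. l2norm (S x) \<ge> l2norm x)"

definition l2_analytic :: "((nat \<Rightarrow> 'a::real_inner) \<Rightarrow> (nat \<Rightarrow> 'a)) \<Rightarrow> bool" where
  "l2_analytic S \<longleftrightarrow> (\<Inter>n. (S ^^ n) ` l2seq) = {(\<lambda>n. 0)}"

text \<open>S on K = l^2(N; H) is a lifting of T on H, where H is identified with the
  subspace V(H) of K through the complex-linear isometry V: T P_H = P_H S, i.e.
  V (T (V^{-1} (P_H k))) = P_H (S k) for all k in K.\<close>

definition l2_lifting :: "('a::real_inner \<Rightarrow> 'a) \<Rightarrow> ('a \<Rightarrow> 'a) \<Rightarrow> ('a \<Rightarrow> (nat \<Rightarrow> 'a))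
    \<Rightarrow> ((nat \<Rightarrow> 'a) \<Rightarrow> (nat \<Rightarrow> 'a)) \<Rightarrow> bool" where
  "l2_lifting J T V S \<longleftrightarrow>
     range V \<subseteq> l2seq \<and>
     (\<forall>x y. V (x + y) = (\<lambda>n. V x n + V y n)) \<and>
     (\<forall>x r. V (r *\<^sub>R x) = (\<lambda>n. r *\<^sub>R V x n)) \<and>
     (\<forall>x. V (J x) = l2J J (V x)) \<and>
     (\<forall>x. l2norm (V x) = norm x) \<and>
     (\<forall>k\<in>l2seq. V (T (inv V (l2proj (range V) k))) = l2proj (range V) (S k))"

end

theory Submission
  imports Defs
begin

(*
  A power bounded T has an adjoint T* with the same power bound M. For weights q_n > 0 with
  q_0 = 1 and sum_n 1/q_n < oo, a self-adjoint D with sum_n (1/q_n) T^n D^2 T*^n = I makes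
  V h = (q_n^(-1/2) D T*^n h)_n an isometry from H into l^2(N; H) with V* S = T V*, where S is
  the weighted shift with weights sqrt (q_(n+1) / q_n); hence S lifts T. Such a D is the fixed
  point of a contraction once M^2 sum_(n>=1) 1/q_n is small. Choosing q_n = 1 + kappa n (n+1)
  with kappa large makes q a quadratic polynomial, so the third differences of q vanish and S
  is a 3-isometry; S is expansive because q increases and analytic as every shift is.
*)

section \<open>Riesz representation and adjoints\<close>

lemma linear_coeff_zero_if_quadratic_nonneg:
  fixes a b :: real
  assumes "\<And>t. 0 \<le> t * a + t\<^sup>2 * b"
  shows "a = 0"
proof (rule ccontr)
  assume "a \<noteq> 0"
  define s where "s = 1 / (\<bar>b\<bar> + 1)"
  have s: "0 < s" "s * b < 1"
    unfolding s_def by (auto simp: field_simps abs_if)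
  have "(- a * s) * a + (- a * s)\<^sup>2 * b = a\<^sup>2 * s * (s * b - 1)"
    by (simp add: power2_eq_square algebra_simps)
  also have "\<dots> < 0"
    using s \<open>a \<noteq> 0\<close> by (simp add: mult_pos_neg)
  finally show False
    using assms[of "- a * s"] by simp
qed

lemma bdd_below_minimizing_sequence:
  fixes \<phi> :: "'a \<Rightarrow> real"
  assumes "bdd_below (range \<phi>)"
  obtains x where "(\<lambda>k. \<phi> (x k)) \<longlonglongrightarrow> Inf (range \<phi>)"
proof -
  have "\<exists>x. \<phi> x < Inf (range \<phi>) + 1 / Suc k" for k
    using cInf_lessD[of "range \<phi>" "Inf (range \<phi>) + 1 / Suc k"] by auto
  then obtain x where x: "\<And>k. \<phi> (x k) < Inf (range \<phi>) + 1 / Suc k"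
    by metis
  have upper: "(\<lambda>k. Inf (range \<phi>) + 1 / Suc k) \<longlonglongrightarrow> Inf (range \<phi>)"
    using tendsto_add[OF tendsto_const LIMSEQ_Suc[OF lim_inverse_n']] by (simp add: inverse_eq_divide)
  have "(\<lambda>k. \<phi> (x k)) \<longlonglongrightarrow> Inf (range \<phi>)"
    by (rule tendsto_sandwich[OF _ _ tendsto_const upper])
      (use x assms in \<open>auto intro: always_eventually less_imp_le cInf_lower\<close>)
  then show thesis
    using that by blast
qed

lemma midpoint_parallelogram_Cauchy:
  fixes \<phi> :: "'a::real_normed_vector \<Rightarrow> real"
  assumes parallelogram: "\<And>a b. (norm (a - b))\<^sup>2 = 4 * (\<phi> a + \<phi> b - 2 * \<phi> (midpoint a b))"
    and lower: "\<And>y. m \<le> \<phi> y" and minimizing: "(\<lambda>k. \<phi> (x k)) \<longlonglongrightarrow> m"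
  shows "Cauchy x"
proof (rule metric_CauchyI)
  fix e :: real assume "e > 0"
  then have "\<forall>\<^sub>F k in sequentially. \<phi> (x k) < m + e\<^sup>2 / 8"
    by (intro order_tendstoD(2)[OF minimizing]) simp
  then obtain N where N: "\<And>k. k \<ge> N \<Longrightarrow> \<phi> (x k) < m + e\<^sup>2 / 8"
    unfolding eventually_sequentially by blast
  have "dist (x i) (x j) < e" if "i \<ge> N" "j \<ge> N" for i j
  proof -
    have "(norm (x i - x j))\<^sup>2 < e\<^sup>2"
      using N[OF that(1)] N[OF that(2)] lower[of "midpoint (x i) (x j)"]
      unfolding parallelogram by argo
    then show ?thesis
      using \<open>e > 0\<close> by (simp add: dist_norm power_less_imp_less_base)
  qed
  then show "\<exists>N. \<forall>i\<ge>N. \<forall>j\<ge>N. dist (x i) (x j) < e"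
    by blast
qed

lemma quadratic_functional_minimizer:
  fixes f :: "'a::{real_inner,complete_space} \<Rightarrow> real"
  assumes "bounded_linear f"
  obtains z where "\<And>y. (norm z)\<^sup>2 / 2 - f z \<le> (norm y)\<^sup>2 / 2 - f y"
proof -
  interpret f: bounded_linear f by fact
  define \<phi> where "\<phi> x = (norm x)\<^sup>2 / 2 - f x" for x
  obtain K where K: "\<And>x. norm (f x) \<le> norm x * K"
    using f.bounded by blast
  have "\<phi> x \<ge> - K\<^sup>2 / 2" for x
    using K[of x] sum_squares_bound[of "norm x" K] by (simp add: \<phi>_def power2_eq_square)
  then have bdd: "bdd_below (range \<phi>)"
    by (intro bdd_belowI2)
  define m where "m = Inf (range \<phi>)"
  have lower: "m \<le> \<phi> y" for y
    unfolding m_def using bdd by (simp add: cInf_lower)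
  obtain x where minimizing: "(\<lambda>k. \<phi> (x k)) \<longlonglongrightarrow> m"
    using bdd_below_minimizing_sequence[OF bdd] unfolding m_def by blast
  have "(norm (a - b))\<^sup>2 = 4 * (\<phi> a + \<phi> b - 2 * \<phi> (midpoint a b))" for a b
    by (simp add: \<phi>_def midpoint_def f.scaleR f.add power2_norm_eq_inner inner_diff_left
        inner_diff_right inner_add_left inner_add_right inner_commute algebra_simps)
  then obtain z where "x \<longlonglongrightarrow> z"
    using midpoint_parallelogram_Cauchy[OF _ lower minimizing] Cauchy_convergent convergent_def
    by blast
  then have "(\<lambda>k. \<phi> (x k)) \<longlonglongrightarrow> \<phi> z"
    unfolding \<phi>_def by (intro tendsto_intros f.tendsto) auto
  then have "\<phi> z = m"
    using minimizing LIMSEQ_unique by blast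
  then show thesis
    using that lower unfolding \<phi>_def by blast
qed

lemma riesz_representation:
  fixes f :: "'a::{real_inner,complete_space} \<Rightarrow> real"
  assumes "bounded_linear f"
  obtains z where "\<And>x. f x = inner x z"
proof -
  interpret f: bounded_linear f by fact
  obtain z where z: "\<And>y. (norm z)\<^sup>2 / 2 - f z \<le> (norm y)\<^sup>2 / 2 - f y"
    using quadratic_functional_minimizer[OF assms] by blast
  have "f v = inner v z" for v
  proof -
    have "0 \<le> t * (inner z v - f v) + t\<^sup>2 * ((norm v)\<^sup>2 / 2)" for t
    proof -
      have "(norm (z + t *\<^sub>R v))\<^sup>2 = (norm z)\<^sup>2 + 2 * t * inner z v + t\<^sup>2 * (norm v)\<^sup>2"
        by (simp only: power2_norm_eq_inner)
          (simp add: inner_add_left inner_add_right inner_commute power2_eq_square algebra_simps)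
      then show ?thesis
        using z[of "z + t *\<^sub>R v"] by (simp add: f.add f.scaleR algebra_simps)
    qed
    then have "inner z v - f v = 0"
      by (rule linear_coeff_zero_if_quadratic_nonneg)
    then show ?thesis
      by (simp add: inner_commute)
  qed
  then show thesis
    using that by blast
qed

definition hilbert_adjoint :: "('a::{real_inner,complete_space} \<Rightarrow> 'a) \<Rightarrow> 'a \<Rightarrow> 'a" where
  "hilbert_adjoint T y = (SOME z. \<forall>x. inner (T x) y = inner x z)"

lemma hilbert_adjoint_inner:
  assumes "bounded_linear T"
  shows "inner (T x) y = inner x (hilbert_adjoint T y)"
proof -
  have "bounded_linear (\<lambda>x. inner (T x) y)"
    using bounded_linear_compose[OF bounded_linear_inner_left assms] .
  then obtain z where "\<forall>x. inner (T x) y = inner x z"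
    using riesz_representation by metis
  then show ?thesis
    unfolding hilbert_adjoint_def by (rule someI2) blast
qed

lemma adjoint_norm_bound:
  fixes T A :: "'a::real_inner \<Rightarrow> 'a"
  assumes adjoint: "\<And>x y. inner (T x) y = inner x (A y)"
    and bound: "\<And>x. norm (T x) \<le> K * norm x" and "0 \<le> K"
  shows "norm (A y) \<le> K * norm y"
proof (cases "A y = 0")
  case False
  have "norm (A y) * norm (A y) = inner (T (A y)) y"
    by (simp add: adjoint flip: power2_eq_square power2_norm_eq_inner)
  also have "\<dots> \<le> norm (T (A y)) * norm y"
    by (rule Cauchy_Schwarz_ineq2[THEN abs_le_D1])
  also have "\<dots> \<le> norm (A y) * (K * norm y)"
    using mult_right_mono[OF bound[of "A y"] norm_ge_zero[of y]] by (simp add: algebra_simps)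
  finally show ?thesis
    using False by simp
qed (use \<open>0 \<le> K\<close> in simp)

lemma adjoint_bounded_linear:
  fixes T A :: "'a::real_inner \<Rightarrow> 'a"
  assumes "bounded_linear T" and adjoint: "\<And>x y. inner (T x) y = inner x (A y)"
  shows "bounded_linear A"
proof -
  obtain K where K: "\<And>x. norm (T x) \<le> norm x * K" "K > 0"
    using bounded_linear.pos_bounded[OF assms(1)] by blast
  show ?thesis
  proof
    show "A (y + z) = A y + A z" for y z
      by (metis adjoint inner_add_right vector_eq_ldot)
    show "A (r *\<^sub>R y) = r *\<^sub>R A y" for r y
      by (metis adjoint inner_scaleR_right vector_eq_ldot)
    show "\<exists>K. \<forall>y. norm (A y) \<le> norm y * K"
      using adjoint_norm_bound[OF adjoint, of K] K by (metis less_imp_le mult.commute)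
  qed
qed

lemma adjoint_funpow_inner:
  fixes T A :: "'a::real_inner \<Rightarrow> 'a"
  assumes "\<And>x y. inner (T x) y = inner x (A y)"
  shows "inner ((T ^^ n) x) y = inner x ((A ^^ n) y)"
proof (induction n arbitrary: x)
  case (Suc n)
  have "inner ((T ^^ n) (T x)) y = inner x (A ((A ^^ n) y))"
    by (simp add: Suc assms)
  then show ?case
    by (simp add: funpow_swap1)
qed simp

lemma complex_structure_skew:
  assumes "complex_structure J"
  shows "inner (J x) y = - inner x (J y)"
proof -
  have J: "linear J" "\<And>x. J (J x) = - x" "\<And>x. norm (J x) = norm x"
    using assms unfolding complex_structure_def by (auto intro: bounded_linear.linear)
  have square: "inner (J a) (J a) = inner a a" for a
    by (metis J(3) power2_norm_eq_inner)
  have isometric: "inner (J a) (J b) = inner a b" for a b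
    using square[of "a + b"] square[of a] square[of b]
    by (simp add: linear_add[OF J(1)] inner_add_left inner_add_right inner_commute)
  show ?thesis
    using isometric[of "J x" y] by (simp add: J(2))
qed

lemma adjoint_commute:
  assumes adjoint: "\<And>x y. inner (T x) y = inner x (A y)"
    and skew: "\<And>x y. inner (J x) y = - inner x (J y)"
    and commute: "\<And>x. T (J x) = J (T x)"
  shows "A (J x) = J (A x)"
proof -
  have "inner y (A (J x)) = inner y (J (A x))" for y
  proof -
    have "inner y (A (J x)) = - inner (J (T y)) x"
      by (simp add: skew flip: adjoint)
    also have "\<dots> = - inner (J y) (A x)"
      by (simp add: adjoint flip: commute)
    also have "\<dots> = inner y (J (A x))"
      by (simp add: skew)
    finally show ?thesis .
  qed
  then show ?thesis
    using vector_eq_ldot by blast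
qed

section \<open>Operator-valued limits and series\<close>

lemma funpow_bounded_linear:
  "bounded_linear (f :: 'a::real_normed_vector \<Rightarrow> 'a) \<Longrightarrow> bounded_linear (f ^^ n)"
proof (induction n)
  case 0
  then show ?case
    using bounded_linear_ident by (simp add: id_def)
next
  case (Suc n)
  then show ?case
    using bounded_linear_compose[of f "f ^^ n"] by (simp add: comp_def)
qed

lemma funpow_commute_apply:
  "(\<And>x. f (g x) = g (f x)) \<Longrightarrow> (f ^^ n) (g x) = g ((f ^^ n) x)"
  by (induction n) simp_all

context
  fixes X :: "nat \<Rightarrow> 'a::real_normed_vector \<Rightarrow>\<^sub>L 'b::real_normed_vector" and L :: "'a \<Rightarrow> 'b"
  assumes pointwise: "\<And>x. (\<lambda>n. X n x) \<longlonglongrightarrow> L x"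
    and uniform: "\<And>e. e > 0 \<Longrightarrow> \<exists>N. \<forall>n\<ge>N. \<forall>x. norm (X n x - L x) \<le> e * norm x"
begin

lemma blinfun_uniform_limit_bounded_linear: "bounded_linear L"
proof
  show "L (x + y) = L x + L y" for x y
  proof -
    have "(\<lambda>n. X n (x + y)) \<longlonglongrightarrow> L x + L y"
      using tendsto_add[OF pointwise[of x] pointwise[of y]] by (simp add: blinfun.add_right)
    then show ?thesis
      using pointwise LIMSEQ_unique by blast
  qed
  show "L (r *\<^sub>R x) = r *\<^sub>R L x" for r x
  proof -
    have "(\<lambda>n. X n (r *\<^sub>R x)) \<longlonglongrightarrow> r *\<^sub>R L x"
      using tendsto_scaleR[OF tendsto_const pointwise[of x]] by (simp add: blinfun.scaleR_right)
    then show ?thesis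
      using pointwise LIMSEQ_unique by blast
  qed
  obtain N where N: "\<And>x. norm (X N x - L x) \<le> norm x"
    using uniform[of 1] by auto
  have "norm (L x) \<le> norm x * (norm (X N) + 1)" for x
    using N[of x] norm_blinfun[of "X N" x] norm_triangle_ineq2[of "L x" "X N x"]
    by (simp add: norm_minus_commute algebra_simps)
  then show "\<exists>K. \<forall>x. norm (L x) \<le> norm x * K"
    by blast
qed

lemma blinfun_uniform_limit_tendsto: "X \<longlonglongrightarrow> Blinfun L"
proof (rule LIMSEQ_I)
  fix e :: real assume "e > 0"
  then obtain N where N: "\<And>n x. n \<ge> N \<Longrightarrow> norm (X n x - L x) \<le> e / 2 * norm x"
    using uniform[of "e / 2"] by auto
  have half: "norm (X n - Blinfun L) \<le> e / 2" if "n \<ge> N" for n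
    using N[OF that] \<open>e > 0\<close> blinfun_uniform_limit_bounded_linear
    by (intro norm_blinfun_bound) (auto simp: blinfun.diff_left bounded_linear_Blinfun_apply)
  have "norm (X n - Blinfun L) < e" if "n \<ge> N" for n
    using half[OF that] \<open>e > 0\<close> by linarith
  then show "\<exists>N. \<forall>n\<ge>N. norm (X n - Blinfun L) < e"
    by blast
qed

end

lemma blinfun_Cauchy_convergent:
  fixes X :: "nat \<Rightarrow> 'a::real_normed_vector \<Rightarrow>\<^sub>L 'b::{real_normed_vector,complete_space}"
  assumes "Cauchy X"
  shows "convergent X"
proof -
  have "convergent (\<lambda>n. X n x)" for x
    using bounded_linear.Cauchy[OF blinfun.bounded_linear_left assms] by (rule Cauchy_convergent)
  then obtain L where L: "\<And>x. (\<lambda>n. X n x) \<longlonglongrightarrow> L x"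
    unfolding convergent_def by metis
  have "\<exists>N. \<forall>n\<ge>N. \<forall>x. norm (X n x - L x) \<le> e * norm x" if "e > 0" for e
  proof -
    obtain N where N: "\<And>m n. m \<ge> N \<Longrightarrow> n \<ge> N \<Longrightarrow> norm (X m - X n) < e"
      using CauchyD[OF assms \<open>e > 0\<close>] by blast
    have "norm (X n x - L x) \<le> e * norm x" if "n \<ge> N" for n x
    proof (rule tendsto_le[OF sequentially_bot tendsto_const])
      show "(\<lambda>m. norm (X n x - X m x)) \<longlonglongrightarrow> norm (X n x - L x)"
        by (intro tendsto_intros L)
      have "norm (X n x - X m x) \<le> e * norm x" if "m \<ge> N" for m
      proof -
        have "norm (X n x - X m x) \<le> norm (X n - X m) * norm x"
          using norm_blinfun[of "X n - X m" x] by (simp add: blinfun.diff_left)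
        also have "\<dots> \<le> e * norm x"
          using N[OF \<open>n \<ge> N\<close> that] by (intro mult_right_mono) auto
        finally show ?thesis .
      qed
      then show "\<forall>\<^sub>F m in sequentially. norm (X n x - X m x) \<le> e * norm x"
        unfolding eventually_sequentially by blast
    qed
    then show ?thesis
      by blast
  qed
  then show ?thesis
    using blinfun_uniform_limit_tendsto[OF L] convergentI by blast
qed

lemma Cauchy_dist_dominated:
  assumes "Cauchy Q" and "\<And>m n. dist (P m) (P n) \<le> dist (Q m) (Q n)"
  shows "Cauchy P"
  using assms unfolding Cauchy_def by (meson le_less_trans)

lemma summable_norm_cancel_if_complete:
  fixes f :: "nat \<Rightarrow> 'a::real_normed_vector"
  assumes complete: "\<And>X :: nat \<Rightarrow> 'a. Cauchy X \<Longrightarrow> convergent X"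
    and "summable (\<lambda>n. norm (f n))"
  shows "summable f"
proof -
  let ?P = "\<lambda>n. \<Sum>i<n. f i" and ?Q = "\<lambda>n. \<Sum>i<n. norm (f i)"
  have tail: "sum g {..<n} - sum g {..<m} = sum g {m..<n}" if "m \<le> n"
    for g :: "nat \<Rightarrow> 'b::ab_group_add" and m n
    using sum_diff_nat_ivl[of 0 m n g] that by (simp add: atLeast0LessThan)
  have dominated: "dist (?P n) (?P m) \<le> dist (?Q n) (?Q m)" if "m \<le> n" for m n
  proof -
    have "dist (?P n) (?P m) = norm (\<Sum>i\<in>{m..<n}. f i)"
      using tail[OF that, of f] by (simp add: dist_norm)
    also have "\<dots> \<le> (\<Sum>i\<in>{m..<n}. norm (f i))"
      by (rule norm_sum)
    also have "\<dots> = dist (?Q n) (?Q m)"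
      using tail[OF that, of "\<lambda>i. norm (f i)"] by (simp add: dist_real_def sum_nonneg)
    finally show ?thesis .
  qed
  have "Cauchy ?P"
  proof (rule Cauchy_dist_dominated)
    show "Cauchy ?Q"
      using assms(2) by (simp add: summable_iff_convergent convergent_Cauchy)
    show "dist (?P m) (?P n) \<le> dist (?Q m) (?Q n)" for m n
      using dominated[of m n] dominated[of n m] by (cases "m \<le> n") (auto simp: dist_commute)
  qed
  then show ?thesis
    unfolding summable_iff_convergent by (rule complete)
qed

lemma norm_suminf_le_suminf_norm:
  assumes "summable f" and "summable (\<lambda>n. norm (f n))"
  shows "norm (suminf f) \<le> (\<Sum>n. norm (f n))"
proof (rule LIMSEQ_le_const2)
  show "(\<lambda>n. norm (\<Sum>i<n. f i)) \<longlonglongrightarrow> norm (suminf f)"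
    using tendsto_norm[OF summable_LIMSEQ[OF assms(1)]] .
  have "norm (\<Sum>i<n. f i) \<le> (\<Sum>n. norm (f n))" for n
    using norm_sum[of f "{..<n}"] sum_le_suminf[OF assms(2), of "{..<n}"] by simp
  then show "\<exists>N. \<forall>n\<ge>N. norm (\<Sum>i<n. f i) \<le> (\<Sum>n. norm (f n))"
    by blast
qed

section \<open>The defect operator\<close>

definition selfadjoint :: "('a::real_inner \<Rightarrow> 'a) \<Rightarrow> bool" where
  "selfadjoint Y \<longleftrightarrow> (\<forall>x y. inner (Y x) y = inner x (Y y))"

lemma selfadjoint_id: "selfadjoint (blinfun_apply id_blinfun)"
  by (simp add: selfadjoint_def)

lemma selfadjoint_blinfun_diff:
  "selfadjoint (blinfun_apply Y) \<Longrightarrow> selfadjoint (blinfun_apply Z) \<Longrightarrow>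
    selfadjoint (blinfun_apply (Y - Z))"
  by (simp add: selfadjoint_def blinfun.diff_left inner_diff_left inner_diff_right)

lemma selfadjoint_blinfun_add_scaleR:
  "selfadjoint (blinfun_apply Y) \<Longrightarrow> selfadjoint (blinfun_apply Z) \<Longrightarrow>
    selfadjoint (blinfun_apply (r *\<^sub>R (Y + Z)))"
  by (simp add: selfadjoint_def blinfun.add_left blinfun.scaleR_left inner_add_left inner_add_right)

lemma selfadjoint_blinfun_square:
  "selfadjoint (blinfun_apply Y) \<Longrightarrow> selfadjoint (blinfun_apply (Y o\<^sub>L Y))"
  by (simp add: selfadjoint_def)

lemma norm_blinfun_square_diff:
  fixes P Q :: "'a::real_normed_vector \<Rightarrow>\<^sub>L 'a"
  shows "norm ((P o\<^sub>L P) - (Q o\<^sub>L Q)) \<le> (norm P + norm Q) * norm (P - Q)"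
proof -
  have "(P o\<^sub>L P) - (Q o\<^sub>L Q) = (P o\<^sub>L (P - Q)) + ((P - Q) o\<^sub>L Q)"
    by (rule blinfun_eqI) (simp add: blinfun.diff_left blinfun.diff_right blinfun.add_left)
  also have "norm \<dots> \<le> norm P * norm (P - Q) + norm (P - Q) * norm Q"
    by (rule order_trans[OF norm_triangle_ineq add_mono[OF norm_blinfun_compose norm_blinfun_compose]])
  finally show ?thesis
    by (simp add: algebra_simps)
qed

lemma norm_id_minus_blinfun: "norm (id_blinfun - Y) \<le> 1 + norm (Y :: 'a::real_normed_vector \<Rightarrow>\<^sub>L 'a)"
  using norm_triangle_ineq4[of id_blinfun Y] norm_blinfun_id_le[where 'a='a] by linarith

locale power_bounded_adjoints =
  fixes J T A :: "'a::{real_inner,complete_space} \<Rightarrow> 'a" and M :: real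
  assumes bounded_J: "bounded_linear J" and bounded_T: "bounded_linear T"
    and adjoint: "\<And>x y. inner (T x) y = inner x (A y)"
    and T_J: "\<And>x. T (J x) = J (T x)" and A_J: "\<And>x. A (J x) = J (A x)"
    and T_pow_bound: "\<And>n x. norm ((T ^^ n) x) \<le> M * norm x"
    and M_nonneg: "0 \<le> M"
begin

lemma bounded_A: "bounded_linear A"
  using adjoint_bounded_linear[OF bounded_T adjoint] .

lemma adjoint_pow: "inner ((T ^^ n) x) y = inner x ((A ^^ n) y)"
  using adjoint_funpow_inner[OF adjoint] .

lemma adjoint_pow_flip: "inner ((A ^^ n) x) y = inner x ((T ^^ n) y)"
  by (metis adjoint_pow inner_commute)

lemma A_pow_bound: "norm ((A ^^ n) x) \<le> M * norm x"
  using adjoint_norm_bound[OF adjoint_pow T_pow_bound M_nonneg] .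

lemma bounded_T_pow: "bounded_linear (T ^^ n)" and bounded_A_pow: "bounded_linear (A ^^ n)"
  using funpow_bounded_linear bounded_T bounded_A by blast+

lemma sandwich_pow_bound:
  fixes Z :: "'a \<Rightarrow>\<^sub>L 'a"
  shows "norm ((T ^^ n) (Z ((A ^^ n) x))) \<le> M\<^sup>2 * norm Z * norm x"
proof -
  have "norm ((T ^^ n) (Z ((A ^^ n) x))) \<le> M * (norm Z * norm ((A ^^ n) x))"
    using T_pow_bound norm_blinfun M_nonneg by (meson mult_left_mono order_trans)
  also have "\<dots> \<le> M * (norm Z * (M * norm x))"
    using A_pow_bound M_nonneg by (intro mult_left_mono) auto
  finally show ?thesis
    by (simp add: power2_eq_square algebra_simps)
qed

end

text \<open>We look for \<open>D\<close> with \<open>sum_n w_n T^n D^2 T*^n = I\<close>. Writing \<open>D = I - Y\<close> and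
  \<open>Phi(Z) = sum_n w_(n+1) T^(n+1) Z T*^(n+1)\<close>, this is the fixed-point equation
  \<open>Y = (Y^2 + Phi((I - Y)^2)) / 2\<close>, a contraction on self-adjoint \<open>Y\<close> with \<open>norm Y \<le> 1/4\<close>
  as soon as \<open>norm Phi \<le> 1/10\<close>; this produces \<open>D\<close> without taking the square root of a
  positive operator.\<close>

locale defect_equation = power_bounded_adjoints +
  fixes w :: "nat \<Rightarrow> real"
  assumes w_0: "w 0 = 1" and w_nonneg: "\<And>n. 0 \<le> w n" and w_summable: "summable w"
    and w_small: "M\<^sup>2 * (\<Sum>n. w (Suc n)) \<le> 1/10"
begin

lemma w_Suc_summable: "summable (\<lambda>n. w (Suc n))"
  using w_summable summable_Suc_iff by blast

definition sandwich_term :: "('a \<Rightarrow>\<^sub>L 'a) \<Rightarrow> nat \<Rightarrow> 'a \<Rightarrow>\<^sub>L 'a" where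
  "sandwich_term Z n = Blinfun (\<lambda>x. w n *\<^sub>R (T ^^ n) (Z ((A ^^ n) x)))"

definition sandwich_sum :: "('a \<Rightarrow>\<^sub>L 'a) \<Rightarrow> 'a \<Rightarrow>\<^sub>L 'a" where
  "sandwich_sum Z = (\<Sum>n. sandwich_term Z (Suc n))"

definition defect_map :: "('a \<Rightarrow>\<^sub>L 'a) \<Rightarrow> 'a \<Rightarrow>\<^sub>L 'a" where
  "defect_map Y = (1/2) *\<^sub>R ((Y o\<^sub>L Y) + sandwich_sum ((id_blinfun - Y) o\<^sub>L (id_blinfun - Y)))"

definition small_selfadjoint_ops :: "('a \<Rightarrow>\<^sub>L 'a) set" where
  "small_selfadjoint_ops = {Y. norm Y \<le> 1/4 \<and> selfadjoint (blinfun_apply Y) \<and> (\<forall>x. Y (J x) = J (Y x))}"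

lemma sandwich_term_apply: "sandwich_term Z n x = w n *\<^sub>R (T ^^ n) (Z ((A ^^ n) x))"
proof -
  have "bounded_linear (\<lambda>x. w n *\<^sub>R (T ^^ n) (Z ((A ^^ n) x)))"
    by (intro bounded_linear_compose[OF bounded_linear_scaleR_right]
        bounded_linear_compose[OF bounded_T_pow] bounded_linear_compose[OF blinfun.bounded_linear_right]
        bounded_A_pow)
  then show ?thesis
    unfolding sandwich_term_def by (simp add: bounded_linear_Blinfun_apply)
qed

lemma norm_sandwich_term: "norm (sandwich_term Z n) \<le> M\<^sup>2 * norm Z * w n"
proof (rule norm_blinfun_bound)
  show "0 \<le> M\<^sup>2 * norm Z * w n"
    using w_nonneg by simp
  show "norm (sandwich_term Z n x) \<le> M\<^sup>2 * norm Z * w n * norm x" for x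
    using mult_left_mono[OF sandwich_pow_bound w_nonneg] w_nonneg
    by (simp add: sandwich_term_apply algebra_simps)
qed

lemma summable_norm_sandwich_term: "summable (\<lambda>n. norm (sandwich_term Z (Suc n)))"
  by (rule summable_comparison_test'[OF summable_mult[OF w_Suc_summable, of "M\<^sup>2 * norm Z"]])
    (simp add: norm_sandwich_term)

lemma summable_sandwich_term: "summable (\<lambda>n. sandwich_term Z (Suc n))"
  using summable_norm_cancel_if_complete[OF blinfun_Cauchy_convergent summable_norm_sandwich_term] .

lemma norm_sandwich_sum: "norm (sandwich_sum Z) \<le> 1/10 * norm Z"
proof -
  have "norm (sandwich_sum Z) \<le> (\<Sum>n. norm (sandwich_term Z (Suc n)))"
    unfolding sandwich_sum_def
    by (rule norm_suminf_le_suminf_norm[OF summable_sandwich_term summable_norm_sandwich_term])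
  also have "\<dots> \<le> (\<Sum>n. M\<^sup>2 * norm Z * w (Suc n))"
    using norm_sandwich_term summable_norm_sandwich_term summable_mult[OF w_Suc_summable]
    by (intro suminf_le) auto
  also have "\<dots> = M\<^sup>2 * norm Z * (\<Sum>n. w (Suc n))"
    by (rule suminf_mult[OF w_Suc_summable])
  also have "\<dots> \<le> 1/10 * norm Z"
    using mult_left_mono[OF w_small norm_ge_zero[of Z]] by (simp add: algebra_simps)
  finally show ?thesis .
qed

lemma sandwich_sum_apply: "(\<lambda>n. sandwich_term Z (Suc n) x) sums sandwich_sum Z x"
  unfolding sandwich_sum_def
  using bounded_linear.sums[OF blinfun.bounded_linear_left summable_sums[OF summable_sandwich_term]] .

lemma sandwich_sum_diff: "sandwich_sum Z1 - sandwich_sum Z2 = sandwich_sum (Z1 - Z2)"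
proof -
  have "sandwich_term Z1 n - sandwich_term Z2 n = sandwich_term (Z1 - Z2) n" for n
    by (rule blinfun_eqI)
      (simp add: blinfun.diff_left sandwich_term_apply scaleR_diff_right
        linear_diff[OF bounded_linear.linear[OF bounded_T_pow]])
  then show ?thesis
    unfolding sandwich_sum_def using suminf_diff[OF summable_sandwich_term summable_sandwich_term] by simp
qed

lemma sandwich_sum_selfadjoint:
  assumes "selfadjoint (blinfun_apply Z)"
  shows "selfadjoint (blinfun_apply (sandwich_sum Z))"
  unfolding selfadjoint_def
proof (intro allI)
  fix x y
  have "inner (sandwich_term Z n x) y = inner x (sandwich_term Z n y)" for n
  proof -
    have "inner ((T ^^ n) (Z ((A ^^ n) x))) y = inner ((A ^^ n) x) (Z ((A ^^ n) y))"
      using assms by (simp add: adjoint_pow selfadjoint_def)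
    also have "\<dots> = inner x ((T ^^ n) (Z ((A ^^ n) y)))"
      by (rule adjoint_pow_flip)
    finally show ?thesis
      by (simp add: sandwich_term_apply)
  qed
  moreover have "(\<lambda>n. inner (sandwich_term Z (Suc n) x) y) sums inner (sandwich_sum Z x) y"
    using bounded_linear.sums[OF bounded_linear_inner_left sandwich_sum_apply] .
  moreover have "(\<lambda>n. inner x (sandwich_term Z (Suc n) y)) sums inner x (sandwich_sum Z y)"
    using bounded_linear.sums[OF bounded_linear_inner_right sandwich_sum_apply] .
  ultimately show "inner (sandwich_sum Z x) y = inner x (sandwich_sum Z y)"
    using sums_unique2 by simp
qed

lemma sandwich_sum_commute:
  fixes Z :: "'a \<Rightarrow>\<^sub>L 'a"
  assumes "\<And>x. Z (J x) = J (Z x)"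
  shows "sandwich_sum Z (J x) = J (sandwich_sum Z x)"
proof -
  have "sandwich_term Z n (J x) = J (sandwich_term Z n x)" for n
    by (simp add: sandwich_term_apply assms funpow_commute_apply[of A J, OF A_J]
        funpow_commute_apply[of T J, OF T_J]
        linear_cmul[OF bounded_linear.linear[OF bounded_J]])
  then have "(\<lambda>n. sandwich_term Z (Suc n) (J x)) sums J (sandwich_sum Z x)"
    using bounded_linear.sums[OF bounded_J sandwich_sum_apply] by simp
  then show ?thesis
    using sandwich_sum_apply sums_unique2 by blast
qed

lemma defect_map_diff:
  "defect_map Y - defect_map Z = (1/2) *\<^sub>R (((Y o\<^sub>L Y) - (Z o\<^sub>L Z)) +
     sandwich_sum (((id_blinfun - Y) o\<^sub>L (id_blinfun - Y)) - ((id_blinfun - Z) o\<^sub>L (id_blinfun - Z))))"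
  unfolding defect_map_def sandwich_sum_diff[symmetric] by (simp add: algebra_simps)

lemma defect_map_small_selfadjoint_ops:
  assumes "Y \<in> small_selfadjoint_ops"
  shows "defect_map Y \<in> small_selfadjoint_ops"
proof -
  let ?P = "(id_blinfun - Y) o\<^sub>L (id_blinfun - Y)"
  have Y: "norm Y \<le> 1/4" "selfadjoint (blinfun_apply Y)" "\<And>x. Y (J x) = J (Y x)"
    using assms unfolding small_selfadjoint_ops_def by auto
  have "norm (id_blinfun - Y) \<le> 5/4"
    using norm_id_minus_blinfun[of Y] Y(1) by linarith
  then have "norm ?P \<le> 5/4 * (5/4)"
    using norm_blinfun_compose[of "id_blinfun - Y"] by (meson mult_mono norm_ge_zero order_trans)
  then have "norm (sandwich_sum ?P) \<le> 1/10 * (25/16)"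
    using norm_sandwich_sum[of ?P] by linarith
  moreover have "norm (Y o\<^sub>L Y) \<le> 1/4 * (1/4)"
    using norm_blinfun_compose[of Y Y] Y(1) by (meson mult_mono norm_ge_zero order_trans)
  ultimately have "norm (defect_map Y) \<le> 1/4"
    unfolding defect_map_def using norm_triangle_ineq[of "Y o\<^sub>L Y" "sandwich_sum ?P"] by simp
  moreover have "selfadjoint (blinfun_apply (defect_map Y))"
    unfolding defect_map_def
    using Y(2) selfadjoint_id
    by (intro selfadjoint_blinfun_add_scaleR selfadjoint_blinfun_square sandwich_sum_selfadjoint
        selfadjoint_blinfun_diff)
  moreover have "defect_map Y (J x) = J (defect_map Y x)" for x
  proof -
    have "?P (J x) = J (?P x)" for x
      using Y(3) by (simp add: blinfun.diff_left blinfun.diff_right linear_simps[OF bounded_J])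
    then show ?thesis
      using Y(3) sandwich_sum_commute[of ?P]
      by (simp add: defect_map_def blinfun.add_left blinfun.scaleR_left blinfun.diff_left
          linear_simps[OF bounded_J])
  qed
  ultimately show ?thesis
    unfolding small_selfadjoint_ops_def by blast
qed

lemma defect_map_contraction:
  assumes "Y \<in> small_selfadjoint_ops" "Z \<in> small_selfadjoint_ops"
  shows "dist (defect_map Y) (defect_map Z) \<le> 3/8 * dist Y Z"
proof -
  let ?P = "\<lambda>Y. (id_blinfun - Y) o\<^sub>L (id_blinfun - Y)"
  have Y: "norm Y \<le> 1/4" and Z: "norm Z \<le> 1/4"
    using assms unfolding small_selfadjoint_ops_def by auto
  have "norm ((Y o\<^sub>L Y) - (Z o\<^sub>L Z)) \<le> 1/2 * norm (Y - Z)"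
    using norm_blinfun_square_diff[of Y Z] mult_right_mono[of "norm Y + norm Z" "1/2" "norm (Y - Z)"] Y Z
    by simp
  moreover have "norm (?P Y - ?P Z) \<le> 5/2 * norm (Y - Z)"
  proof -
    have "norm (id_blinfun - Y) + norm (id_blinfun - Z) \<le> 5/2"
      using norm_id_minus_blinfun[of Y] norm_id_minus_blinfun[of Z] Y Z by linarith
    then have "(norm (id_blinfun - Y) + norm (id_blinfun - Z)) * norm (Y - Z) \<le> 5/2 * norm (Y - Z)"
      by (rule mult_right_mono) simp
    then show ?thesis
      using norm_blinfun_square_diff[of "id_blinfun - Y" "id_blinfun - Z"]
      by (simp add: norm_minus_commute)
  qed
  then have "norm (sandwich_sum (?P Y - ?P Z)) \<le> 1/4 * norm (Y - Z)"
    using norm_sandwich_sum[of "?P Y - ?P Z"] by linarith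
  ultimately have "norm (((Y o\<^sub>L Y) - (Z o\<^sub>L Z)) + sandwich_sum (?P Y - ?P Z)) \<le> 3/4 * norm (Y - Z)"
    using norm_triangle_ineq[of "(Y o\<^sub>L Y) - (Z o\<^sub>L Z)" "sandwich_sum (?P Y - ?P Z)"] by linarith
  then show ?thesis
    unfolding dist_norm defect_map_diff by simp
qed

lemma complete_small_selfadjoint_ops: "complete small_selfadjoint_ops"
proof -
  have "closed {Y :: 'a \<Rightarrow>\<^sub>L 'a. norm Y \<le> 1/4}"
    by (intro closed_Collect_le continuous_intros)
  moreover have "closed {Y :: 'a \<Rightarrow>\<^sub>L 'a. selfadjoint (blinfun_apply Y)}"
    unfolding selfadjoint_def
    by (intro closed_Collect_all closed_Collect_eq linear_continuous_on
        bounded_linear_compose[OF bounded_linear_inner_left blinfun.bounded_linear_left]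
        bounded_linear_compose[OF bounded_linear_inner_right blinfun.bounded_linear_left])
  moreover have "closed {Y :: 'a \<Rightarrow>\<^sub>L 'a. \<forall>x. Y (J x) = J (Y x)}"
    by (intro closed_Collect_all closed_Collect_eq linear_continuous_on blinfun.bounded_linear_left
        bounded_linear_compose[OF bounded_J blinfun.bounded_linear_left])
  ultimately have "closed small_selfadjoint_ops"
    unfolding small_selfadjoint_ops_def by (simp add: Collect_conj_eq closed_Int)
  then show ?thesis
    unfolding complete_def
    using blinfun_Cauchy_convergent closed_sequentially convergent_def by metis
qed

lemma defect_map_fixed_point:
  assumes "defect_map Y = Y"
  defines "D \<equiv> id_blinfun - Y"
  shows "D (D h) + sandwich_sum (D o\<^sub>L D) h = h"
proof -
  have "2 *\<^sub>R Y h = Y (Y h) + sandwich_sum (D o\<^sub>L D) h"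
    using arg_cong[OF assms(1), of "\<lambda>Z. 2 *\<^sub>R Z h"]
    by (simp add: defect_map_def D_def blinfun.add_left blinfun.scaleR_left)
  then show ?thesis
    unfolding D_def by (simp add: blinfun.diff_left blinfun.diff_right algebra_simps scaleR_2)
qed

theorem defect_operator_exists:
  obtains D :: "'a \<Rightarrow>\<^sub>L 'a"
  where "selfadjoint (blinfun_apply D)" and "\<And>x. D (J x) = J (D x)"
    and "\<And>h. (\<lambda>n. w n *\<^sub>R (T ^^ n) (D (D ((A ^^ n) h)))) sums h"
proof -
  have "0 \<in> small_selfadjoint_ops"
    unfolding small_selfadjoint_ops_def selfadjoint_def by (simp add: linear_simps[OF bounded_J])
  then have "\<exists>!Y\<in>small_selfadjoint_ops. defect_map Y = Y"
    using defect_map_small_selfadjoint_ops defect_map_contraction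
    by (intro Banach_fix[OF complete_small_selfadjoint_ops, of "3/8"]) auto
  then obtain Y where Y: "Y \<in> small_selfadjoint_ops" "defect_map Y = Y"
    by blast
  define D where "D = id_blinfun - Y"
  have "selfadjoint (blinfun_apply D)"
    using Y(1) selfadjoint_id unfolding D_def small_selfadjoint_ops_def
    by (auto intro: selfadjoint_blinfun_diff)
  moreover have "D (J x) = J (D x)" for x
    using Y(1) unfolding D_def small_selfadjoint_ops_def
    by (simp add: blinfun.diff_left linear_simps[OF bounded_J])
  moreover have "(\<lambda>n. w n *\<^sub>R (T ^^ n) (D (D ((A ^^ n) h)))) sums h" for h
  proof -
    let ?f = "\<lambda>n. w n *\<^sub>R (T ^^ n) (D (D ((A ^^ n) h)))"
    have "(\<lambda>n. ?f (Suc n)) sums sandwich_sum (D o\<^sub>L D) h"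
      using sandwich_sum_apply[of "D o\<^sub>L D" h]
      by (simp only: sandwich_term_apply blinfun_apply_blinfun_compose)
    then have "?f sums (sandwich_sum (D o\<^sub>L D) h + ?f 0)"
      by (rule sums_Suc)
    then show ?thesis
      using defect_map_fixed_point[OF Y(2), of h, folded D_def] w_0 by (simp add: add.commute)
  qed
  ultimately show thesis
    using that by blast
qed

end

section \<open>Square-summable sequences\<close>

lemma l2seq_inner_summable:
  assumes "x \<in> l2seq" "y \<in> l2seq"
  shows "summable (\<lambda>n. inner (x n) (y n))"
proof (rule summable_comparison_test')
  show "summable (\<lambda>n. ((norm (x n))\<^sup>2 + (norm (y n))\<^sup>2) / 2)"
    using assms unfolding l2seq_def by (intro summable_divide summable_add) auto
  show "norm (inner (x n) (y n)) \<le> ((norm (x n))\<^sup>2 + (norm (y n))\<^sup>2) / 2" for n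
    using Cauchy_Schwarz_ineq2[of "x n" "y n"] sum_squares_bound[of "norm (x n)" "norm (y n)"]
    by (simp add: power2_eq_square)
qed

lemma l2seq_add:
  assumes "x \<in> l2seq" "y \<in> l2seq"
  shows "(\<lambda>n. x n + y n) \<in> l2seq"
  unfolding l2seq_def mem_Collect_eq
proof (rule summable_comparison_test'[where g = "\<lambda>n. 2 * (norm (x n))\<^sup>2 + 2 * (norm (y n))\<^sup>2"])
  show "summable (\<lambda>n. 2 * (norm (x n))\<^sup>2 + 2 * (norm (y n))\<^sup>2)"
    using assms unfolding l2seq_def by (intro summable_add summable_mult) auto
  show "norm ((norm (x n + y n))\<^sup>2) \<le> 2 * (norm (x n))\<^sup>2 + 2 * (norm (y n))\<^sup>2" for n
  proof -
    have "(norm (x n + y n))\<^sup>2 \<le> (norm (x n) + norm (y n))\<^sup>2"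
      by (intro power_mono norm_triangle_ineq) simp
    also have "\<dots> \<le> 2 * (norm (x n))\<^sup>2 + 2 * (norm (y n))\<^sup>2"
      using sum_squares_bound[of "norm (x n)" "norm (y n)"] by (simp add: power2_eq_square algebra_simps)
    finally show ?thesis
      by simp
  qed
qed

lemma l2seq_scaleR_bounded:
  assumes "x \<in> l2seq" and "\<And>n. \<bar>c n\<bar> \<le> K"
  shows "(\<lambda>n. c n *\<^sub>R x n) \<in> l2seq"
  unfolding l2seq_def mem_Collect_eq
proof (rule summable_comparison_test'[where g = "\<lambda>n. K\<^sup>2 * (norm (x n))\<^sup>2"])
  show "summable (\<lambda>n. K\<^sup>2 * (norm (x n))\<^sup>2)"
    using assms unfolding l2seq_def by (intro summable_mult) auto
  show "norm ((norm (c n *\<^sub>R x n))\<^sup>2) \<le> K\<^sup>2 * (norm (x n))\<^sup>2" for n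
  proof -
    have "(c n)\<^sup>2 \<le> K\<^sup>2"
      using power_mono[OF assms(2)[of n] abs_ge_zero, of 2] by simp
    then show ?thesis
      by (simp add: power_mult_distrib mult_right_mono)
  qed
qed

lemma l2seq_diff:
  assumes "x \<in> l2seq" "y \<in> l2seq"
  shows "(\<lambda>n. x n - y n) \<in> l2seq"
  using l2seq_add[OF assms(1) l2seq_scaleR_bounded[OF assms(2), of "\<lambda>n. -1" 1]] by simp

lemma l2seq_shift_iff: "(\<lambda>n. x (Suc n)) \<in> l2seq \<longleftrightarrow> x \<in> l2seq"
  unfolding l2seq_def mem_Collect_eq by (rule summable_Suc_iff)

lemma l2inner_diff_left:
  assumes "x \<in> l2seq" "y \<in> l2seq" "z \<in> l2seq"
  shows "l2inner (\<lambda>n. x n - y n) z = l2inner x z - l2inner y z"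
  unfolding l2inner_def
  using suminf_diff[OF l2seq_inner_summable[OF assms(1,3)] l2seq_inner_summable[OF assms(2,3)]]
  by (simp add: inner_diff_left)

lemma l2inner_commute: "l2inner x y = l2inner y x"
  unfolding l2inner_def by (simp add: inner_commute)

lemma l2inner_self_sums: "x \<in> l2seq \<Longrightarrow> (\<lambda>n. (norm (x n))\<^sup>2) sums l2inner x x"
  unfolding l2seq_def l2inner_def by (simp add: power2_norm_eq_inner summable_sums)

lemma l2seq_zero_if_inner_self_zero:
  assumes "x \<in> l2seq" "l2inner x x = 0"
  shows "x = (\<lambda>n. 0)"
proof -
  have "(\<lambda>n. (norm (x n))\<^sup>2) sums 0"
    using l2inner_self_sums[OF assms(1)] assms(2) by simp
  then have "\<forall>n. (norm (x n))\<^sup>2 = 0"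
    using suminf_eq_zero_iff[of "\<lambda>n. (norm (x n))\<^sup>2"] by (simp add: sums_iff)
  then show ?thesis
    by auto
qed

lemma l2seq_eq_if_inner_eq:
  assumes "z \<in> l2seq" "z' \<in> l2seq" and "\<And>x. x \<in> l2seq \<Longrightarrow> l2inner x z = l2inner x z'"
  shows "z = z'"
proof -
  let ?d = "\<lambda>n. z n - z' n"
  have d: "?d \<in> l2seq"
    using l2seq_diff[OF assms(1,2)] .
  have "l2inner ?d ?d = 0"
    using l2inner_diff_left[OF assms(1,2) d] assms(3)[OF d]
    by (simp add: l2inner_commute[of z] l2inner_commute[of z'])
  then have "?d = (\<lambda>n. 0)"
    by (rule l2seq_zero_if_inner_self_zero[OF d])
  then show ?thesis
    by (simp add: fun_eq_iff)
qed

lemma l2adj_eqI: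
  assumes "y \<in> l2seq" "z \<in> l2seq" and "\<And>x. x \<in> l2seq \<Longrightarrow> l2inner (S x) y = l2inner x z"
  shows "l2adj S y = z"
  unfolding l2adj_def
proof (rule the_equality)
  show "z \<in> l2seq \<and> (\<forall>x\<in>l2seq. l2inner (S x) y = l2inner x z)"
    using assms by blast
  show "z' = z" if "z' \<in> l2seq \<and> (\<forall>x\<in>l2seq. l2inner (S x) y = l2inner x z')" for z'
    using that assms by (intro l2seq_eq_if_inner_eq) auto
qed

lemma l2proj_eqI:
  assumes "M \<subseteq> l2seq" and diff: "\<And>m m'. m \<in> M \<Longrightarrow> m' \<in> M \<Longrightarrow> (\<lambda>n. m n - m' n) \<in> M"
    and "k \<in> l2seq" "p \<in> M" and "\<And>m. m \<in> M \<Longrightarrow> l2inner (\<lambda>n. k n - p n) m = 0"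
  shows "l2proj M k = p"
  unfolding l2proj_def
proof (rule the_equality)
  show "p \<in> M \<and> (\<forall>m\<in>M. l2inner (\<lambda>n. k n - p n) m = 0)"
    using assms(4,5) by blast
next
  fix p' assume p': "p' \<in> M \<and> (\<forall>m\<in>M. l2inner (\<lambda>n. k n - p' n) m = 0)"
  let ?d = "\<lambda>n. p' n - p n"
  have d: "?d \<in> M"
    using diff p' assms(4) by blast
  have l2: "(\<lambda>n. k n - p n) \<in> l2seq" "(\<lambda>n. k n - p' n) \<in> l2seq" "?d \<in> l2seq"
    using assms(1,3,4) p' d by (auto intro!: l2seq_diff)
  have "l2inner ?d ?d = l2inner (\<lambda>n. k n - p n) ?d - l2inner (\<lambda>n. k n - p' n) ?d"
    using l2inner_diff_left[OF l2] by simp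
  also have "\<dots> = 0"
    using assms(5)[OF d] p' d by simp
  finally have "?d = (\<lambda>n. 0)"
    by (rule l2seq_zero_if_inner_self_zero[OF l2(3)])
  then show "p' = p"
    by (simp add: fun_eq_iff)
qed

section \<open>Weighted shifts\<close>

definition weighted_shift :: "(nat \<Rightarrow> real) \<Rightarrow> (nat \<Rightarrow> 'a::real_vector) \<Rightarrow> nat \<Rightarrow> 'a" where
  "weighted_shift w k = (\<lambda>m. case m of 0 \<Rightarrow> 0 | Suc n \<Rightarrow> w n *\<^sub>R k n)"

definition weighted_shift_adj :: "(nat \<Rightarrow> real) \<Rightarrow> (nat \<Rightarrow> 'a::real_vector) \<Rightarrow> nat \<Rightarrow> 'a" where
  "weighted_shift_adj w y = (\<lambda>n. w n *\<^sub>R y (Suc n))"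

lemma weighted_shift_0 [simp]: "weighted_shift w k 0 = 0"
  and weighted_shift_Suc [simp]: "weighted_shift w k (Suc n) = w n *\<^sub>R k n"
  by (simp_all add: weighted_shift_def)

lemma weighted_shift_pow_vanishes: "m < j \<Longrightarrow> (weighted_shift w ^^ j) x m = 0"
proof (induction j arbitrary: m)
  case (Suc j)
  then show ?case
    by (cases m) simp_all
qed simp

context
  fixes w :: "nat \<Rightarrow> real" and K :: real
  assumes bounded_weights: "\<And>n. \<bar>w n\<bar> \<le> K"
begin

lemma weighted_shift_l2seq: "k \<in> l2seq \<Longrightarrow> weighted_shift w k \<in> l2seq"
  using l2seq_shift_iff[of "weighted_shift w k"] l2seq_scaleR_bounded[of k w, OF _ bounded_weights] by simp

lemma weighted_shift_adj_l2seq: "y \<in> l2seq \<Longrightarrow> weighted_shift_adj w y \<in> l2seq"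
  unfolding weighted_shift_adj_def
  using l2seq_shift_iff[of y] l2seq_scaleR_bounded[of "\<lambda>n. y (Suc n)" w, OF _ bounded_weights] by blast

lemma l2adj_weighted_shift:
  assumes "y \<in> l2seq"
  shows "l2adj (weighted_shift w) y = weighted_shift_adj w y"
proof (rule l2adj_eqI[OF assms weighted_shift_adj_l2seq[OF assms]])
  fix x :: "nat \<Rightarrow> 'a" assume "x \<in> l2seq"
  then have "(\<lambda>n. inner (weighted_shift w x n) (y n)) sums l2inner (weighted_shift w x) y"
    unfolding l2inner_def using l2seq_inner_summable[OF weighted_shift_l2seq assms] by (simp add: summable_sums)
  then have "(\<lambda>n. inner (weighted_shift w x (Suc n)) (y (Suc n))) sums l2inner (weighted_shift w x) y"
    using sums_Suc_iff[of "\<lambda>n. inner (weighted_shift w x n) (y n)"] by simp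
  then have "(\<lambda>n. inner (x n) (weighted_shift_adj w y n)) sums l2inner (weighted_shift w x) y"
    by (simp add: weighted_shift_adj_def)
  then show "l2inner (weighted_shift w x) y = l2inner x (weighted_shift_adj w y)"
    unfolding l2inner_def by (simp add: sums_iff)
qed

lemma weighted_shift_inner_self_sums:
  "x \<in> l2seq \<Longrightarrow> (\<lambda>n. (w n)\<^sup>2 * (norm (x n))\<^sup>2) sums l2inner (weighted_shift w x) (weighted_shift w x)"
  using l2inner_self_sums[OF weighted_shift_l2seq, of x] sums_Suc_iff[of "\<lambda>n. (norm (weighted_shift w x n))\<^sup>2"]
  by (simp add: power_mult_distrib)

lemma weighted_shift_l2_expansive:
  assumes "\<And>n. 1 \<le> \<bar>w n\<bar>"
  shows "l2_expansive (weighted_shift w :: (nat \<Rightarrow> 'a::real_inner) \<Rightarrow> _)"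
  unfolding l2_expansive_def l2norm_def
proof (intro ballI real_sqrt_le_mono)
  fix x :: "nat \<Rightarrow> 'a" assume x: "x \<in> l2seq"
  have "(norm (x n))\<^sup>2 \<le> (w n)\<^sup>2 * (norm (x n))\<^sup>2" for n
    using one_le_power[OF assms[of n], of 2] by (simp add: mult_le_cancel_right1)
  then show "l2inner x x \<le> l2inner (weighted_shift w x) (weighted_shift w x)"
    by (rule sums_le[OF _ l2inner_self_sums[OF x] weighted_shift_inner_self_sums[OF x]])
qed

lemma weighted_shift_l2_operator:
  assumes "bounded_linear J"
  shows "l2_operator J (weighted_shift w)"
  unfolding l2_operator_def
proof (intro conjI ballI allI)
  show "weighted_shift w ` l2seq \<subseteq> l2seq"
    using weighted_shift_l2seq by blast
  show "weighted_shift w (\<lambda>n. x n + y n) = (\<lambda>n. weighted_shift w x n + weighted_shift w y n)" for x y :: "nat \<Rightarrow> 'a"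
    by (simp add: weighted_shift_def scaleR_add_right fun_eq_iff split: nat.split)
  show "weighted_shift w (\<lambda>n. r *\<^sub>R x n) = (\<lambda>n. r *\<^sub>R weighted_shift w x n)" for r and x :: "nat \<Rightarrow> 'a"
    by (simp add: weighted_shift_def fun_eq_iff split: nat.split)
  show "weighted_shift w (l2J J x) = l2J J (weighted_shift w x)" for x
    by (simp add: weighted_shift_def l2J_def fun_eq_iff linear_simps[OF assms] split: nat.split)
  have "l2norm (weighted_shift w x) \<le> \<bar>K\<bar> * l2norm x" if "x \<in> l2seq" for x :: "nat \<Rightarrow> 'a"
  proof -
    have "(w n)\<^sup>2 * (norm (x n))\<^sup>2 \<le> K\<^sup>2 * (norm (x n))\<^sup>2" for n
      using power_mono[OF bounded_weights[of n] abs_ge_zero, of 2] by (simp add: mult_right_mono)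
    then have "l2inner (weighted_shift w x) (weighted_shift w x) \<le> K\<^sup>2 * l2inner x x"
      by (rule sums_le[OF _ weighted_shift_inner_self_sums[OF that] sums_mult[OF l2inner_self_sums[OF that]]])
    then have "sqrt (l2inner (weighted_shift w x) (weighted_shift w x)) \<le> sqrt (K\<^sup>2) * sqrt (l2inner x x)"
      by (metis real_sqrt_le_mono real_sqrt_mult)
    then show ?thesis
      unfolding l2norm_def by simp
  qed
  then show "\<exists>C. \<forall>x\<in>l2seq. l2norm (weighted_shift w x) \<le> C * l2norm (x :: nat \<Rightarrow> 'a)"
    by blast
qed

end

lemma weighted_shift_l2_analytic: "l2_analytic (weighted_shift w :: (nat \<Rightarrow> 'a::real_inner) \<Rightarrow> _)"
  unfolding l2_analytic_def
proof
  show "(\<Inter>n. (weighted_shift w ^^ n) ` l2seq) \<subseteq> {\<lambda>n. 0 :: 'a}"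
  proof
    fix y assume y: "y \<in> (\<Inter>n. (weighted_shift w ^^ n) ` (l2seq :: (nat \<Rightarrow> 'a) set))"
    have "y m = 0" for m
    proof -
      obtain x where "y = (weighted_shift w ^^ Suc m) x"
        using y by blast
      then show ?thesis
        by (simp only: weighted_shift_pow_vanishes)
    qed
    then show "y \<in> {\<lambda>n. 0}"
      by auto
  qed
  have "(weighted_shift w ^^ n) (\<lambda>n. 0) = (\<lambda>n. 0 :: 'a)" for n
    by (induction n) (simp_all add: weighted_shift_def fun_eq_iff split: nat.split)
  moreover have "(\<lambda>n. 0 :: 'a) \<in> l2seq"
    by (simp add: l2seq_def)
  ultimately show "{\<lambda>n. 0 :: 'a} \<subseteq> (\<Inter>n. (weighted_shift w ^^ n) ` l2seq)"
    by (auto intro: image_eqI[OF sym])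
qed


definition ratio_weights :: "(nat \<Rightarrow> real) \<Rightarrow> nat \<Rightarrow> real" where
  "ratio_weights q n = sqrt (q (Suc n) / q n)"

lemma ratio_weights_bounded:
  assumes "\<And>n. 0 < q n" and "\<And>n. q (Suc n) \<le> K * q n"
  shows "\<bar>ratio_weights q n\<bar> \<le> sqrt K"
proof -
  have "0 \<le> q (Suc n) / q n" "q (Suc n) / q n \<le> K"
    using assms(1)[of n] assms(1)[of "Suc n"] assms(2)[of n] by (simp_all add: divide_le_eq)
  then show ?thesis
    unfolding ratio_weights_def by (metis abs_of_nonneg real_sqrt_ge_zero real_sqrt_le_mono)
qed

lemma ratio_weights_ge_1:
  assumes "\<And>n. 0 < q n" and "\<And>n. q n \<le> q (Suc n)"
  shows "1 \<le> \<bar>ratio_weights q n\<bar>"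
  using assms[of n] by (simp add: ratio_weights_def)

context
  fixes q :: "nat \<Rightarrow> real"
  assumes q_pos: "\<And>n. 0 < q n"
begin

lemma ratio_weights_mult: "ratio_weights q n * sqrt (q n / c) = sqrt (q (Suc n) / c)"
  using q_pos[of n] by (simp add: ratio_weights_def flip: real_sqrt_mult)

lemma weighted_shift_pow_apply:
  "(weighted_shift (ratio_weights q) ^^ j) x m = (if m < j then 0 else sqrt (q m / q (m - j)) *\<^sub>R x (m - j))"
proof (induction j arbitrary: m)
  case (Suc j)
  then show ?case
    by (cases m) (simp_all add: ratio_weights_mult Suc_diff_le)
qed (simp add: q_pos less_imp_neq[symmetric])

lemma weighted_shift_adj_pow_apply:
  "(weighted_shift_adj (ratio_weights q) ^^ j) y n = sqrt (q (n + j) / q n) *\<^sub>R y (n + j)"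
proof (induction j arbitrary: y)
  case (Suc j)
  have "(weighted_shift_adj (ratio_weights q) ^^ Suc j) y n = (weighted_shift_adj (ratio_weights q) ^^ j) (weighted_shift_adj (ratio_weights q) y) n"
    by (simp add: funpow_swap1)
  also have "\<dots> = sqrt (q (n + Suc j) / q n) *\<^sub>R y (n + Suc j)"
    using ratio_weights_mult[of "n + j" "q n"] by (simp add: Suc weighted_shift_adj_def mult.commute)
  finally show ?case .
qed (simp add: q_pos less_imp_neq[symmetric])

lemma weighted_shift_adj_pow_weighted_shift_pow:
  "(weighted_shift_adj (ratio_weights q) ^^ j) ((weighted_shift (ratio_weights q) ^^ j) x) n = (q (n + j) / q n) *\<^sub>R x n"
  using q_pos[of n] q_pos[of "n + j"]
  by (simp add: weighted_shift_adj_pow_apply weighted_shift_pow_apply flip: real_sqrt_mult)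

end

lemma weighted_shift_three_isometric:
  assumes q_pos: "\<And>n. 0 < q n" and q_ratio: "\<And>n. q (Suc n) \<le> K * q n"
    and third_difference: "\<And>n. q n - 3 * q (n + 1) + 3 * q (n + 2) - q (n + 3) = 0"
  shows "three_isometric (weighted_shift (ratio_weights q) :: (nat \<Rightarrow> 'a::real_inner) \<Rightarrow> _)"
  unfolding three_isometric_def
proof (intro ballI ext)
  let ?S = "weighted_shift (ratio_weights q) :: (nat \<Rightarrow> 'a) \<Rightarrow> _"
  note bounded = ratio_weights_bounded[of q K, OF q_pos q_ratio]
  fix x :: "nat \<Rightarrow> 'a" and n assume x: "x \<in> l2seq"
  have "(l2adj ?S ^^ j) y = (weighted_shift_adj (ratio_weights q) ^^ j) y" if "y \<in> l2seq" for j y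
  proof (induction j)
    case (Suc j)
    have "(weighted_shift_adj (ratio_weights q) ^^ j) y \<in> l2seq"
      by (induction j) (simp_all add: that weighted_shift_adj_l2seq[OF bounded])
    then show ?case
      by (simp add: Suc l2adj_weighted_shift[OF bounded])
  qed simp
  moreover have "(?S ^^ j) x \<in> l2seq" for j
    by (induction j) (simp_all add: x weighted_shift_l2seq[OF bounded])
  ultimately have "(\<Sum>j\<le>3. ((-1) ^ j * real (3 choose j)) *\<^sub>R ((l2adj ?S ^^ j) ((?S ^^ j) x)) n)
      = (\<Sum>j\<le>3. (-1) ^ j * real (3 choose j) * (q (n + j) / q n)) *\<^sub>R x n"
    by (simp add: weighted_shift_adj_pow_weighted_shift_pow q_pos scaleR_sum_left)
  also have "(\<Sum>j\<le>3. (-1) ^ j * real (3 choose j) * (q (n + j) / q n))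
      = (q n - 3 * q (n + 1) + 3 * q (n + 2) - q (n + 3)) / q n"
    using q_pos[of n] by (simp add: numeral_3_eq_3 numeral_2_eq_2 field_simps)
  finally show "(\<Sum>j\<le>3. ((-1) ^ j * real (3 choose j)) *\<^sub>R ((l2adj ?S ^^ j) ((?S ^^ j) x)) n) = 0"
    using third_difference[of n] by simp
qed

section \<open>The isometric embedding\<close>

locale dilation = power_bounded_adjoints +
  fixes q :: "nat \<Rightarrow> real" and D :: "'a::{real_inner,complete_space} \<Rightarrow>\<^sub>L 'a"
  assumes q_pos: "\<And>n. 0 < q n" and q_summable: "summable (\<lambda>n. 1 / q n)"
    and D_selfadjoint: "selfadjoint (blinfun_apply D)" and D_J: "\<And>x. D (J x) = J (D x)"
    and defect_sums: "\<And>h. (\<lambda>n. (1 / q n) *\<^sub>R (T ^^ n) (D (D ((A ^^ n) h)))) sums h"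
begin

definition embed :: "'a \<Rightarrow> nat \<Rightarrow> 'a" where
  "embed h = (\<lambda>n. (1 / sqrt (q n)) *\<^sub>R D ((A ^^ n) h))"

definition embed_adj :: "(nat \<Rightarrow> 'a) \<Rightarrow> 'a" where
  "embed_adj k = (\<Sum>n. (1 / sqrt (q n)) *\<^sub>R (T ^^ n) (D (k n)))"

lemma embed_l2seq: "embed h \<in> l2seq"
  unfolding l2seq_def mem_Collect_eq
proof (rule summable_comparison_test'[OF summable_mult[OF q_summable, of "(norm D * M * norm h)\<^sup>2"]])
  fix n
  have "norm (D ((A ^^ n) h)) \<le> norm D * norm ((A ^^ n) h)"
    by (rule norm_blinfun)
  also have "\<dots> \<le> norm D * (M * norm h)"
    by (intro mult_left_mono A_pow_bound) simp
  finally have "norm (D ((A ^^ n) h)) \<le> norm D * M * norm h"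
    by (simp add: mult.assoc)
  then have "(norm (D ((A ^^ n) h)))\<^sup>2 \<le> (norm D * M * norm h)\<^sup>2"
    by (intro power_mono) auto
  then show "norm ((norm (embed h n))\<^sup>2) \<le> (norm D * M * norm h)\<^sup>2 * (1 / q n)"
    using q_pos[of n] by (simp add: embed_def power_mult_distrib power_divide field_simps)
qed

lemma embed_adj_summable:
  assumes "k \<in> l2seq"
  shows "summable (\<lambda>n. (1 / sqrt (q n)) *\<^sub>R (T ^^ n) (D (k n)))"
proof (rule summable_norm_cancel_if_complete[OF Cauchy_convergent])
  show "summable (\<lambda>n. norm ((1 / sqrt (q n)) *\<^sub>R (T ^^ n) (D (k n))))"
  proof (rule summable_comparison_test')
    show "summable (\<lambda>n. M * norm D / 2 * (1 / q n + (norm (k n))\<^sup>2))"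
      using assms q_summable unfolding l2seq_def by (intro summable_mult summable_add) auto
    fix n
    have "norm ((T ^^ n) (D (k n))) \<le> M * norm (D (k n))"
      by (rule T_pow_bound)
    also have "\<dots> \<le> M * (norm D * norm (k n))"
      by (intro mult_left_mono norm_blinfun M_nonneg)
    finally have "norm ((1 / sqrt (q n)) *\<^sub>R (T ^^ n) (D (k n)))
        \<le> M * norm D * (1 / sqrt (q n) * norm (k n))"
      using q_pos[of n] by (simp add: divide_right_mono mult.assoc mult.left_commute)
    also have "\<dots> \<le> M * norm D * ((1 / q n + (norm (k n))\<^sup>2) / 2)"
      using sum_squares_bound[of "1 / sqrt (q n)" "norm (k n)"] q_pos[of n] M_nonneg
      by (intro mult_left_mono) (simp_all add: power_divide mult.commute)
    finally show "norm (norm ((1 / sqrt (q n)) *\<^sub>R (T ^^ n) (D (k n))))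
        \<le> M * norm D / 2 * (1 / q n + (norm (k n))\<^sup>2)"
      by simp
  qed
qed

lemma embed_inner:
  assumes "k \<in> l2seq"
  shows "l2inner (embed h) k = inner h (embed_adj k)"
proof -
  have "inner (D ((A ^^ n) h)) (k n) = inner h ((T ^^ n) (D (k n)))" for n
    using D_selfadjoint by (simp add: selfadjoint_def adjoint_pow_flip)
  then have "inner (embed h n) (k n) = inner h ((1 / sqrt (q n)) *\<^sub>R (T ^^ n) (D (k n)))" for n
    by (simp add: embed_def)
  then show ?thesis
    unfolding l2inner_def embed_adj_def
    using bounded_linear.suminf[OF bounded_linear_inner_right embed_adj_summable[OF assms]] by simp
qed


lemma embed_adj_embed: "embed_adj (embed h) = h"
proof -
  have "(1 / sqrt (q n)) *\<^sub>R (T ^^ n) (D (embed h n)) = (1 / q n) *\<^sub>R (T ^^ n) (D (D ((A ^^ n) h)))" for n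
    using q_pos[of n]
    by (simp add: embed_def blinfun.scaleR_right linear_cmul[OF bounded_linear.linear[OF bounded_T_pow]]
        flip: real_sqrt_mult)
  then show ?thesis
    unfolding embed_adj_def using sums_unique[OF defect_sums[of h]] by simp
qed

lemma embed_isometric: "l2norm (embed h) = norm h"
  unfolding l2norm_def embed_inner[OF embed_l2seq] embed_adj_embed by (simp add: norm_eq_sqrt_inner)

lemma embed_add: "embed (x + y) = (\<lambda>n. embed x n + embed y n)"
  by (simp add: embed_def linear_add[OF bounded_linear.linear[OF bounded_A_pow]] blinfun.add_right
      scaleR_add_right)

lemma embed_scaleR: "embed (r *\<^sub>R x) = (\<lambda>n. r *\<^sub>R embed x n)"
  by (simp add: embed_def linear_cmul[OF bounded_linear.linear[OF bounded_A_pow]] blinfun.scaleR_right)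

lemma embed_J: "embed (J x) = l2J J (embed x)"
  by (simp add: embed_def l2J_def funpow_commute_apply[of A J, OF A_J] D_J
      linear_cmul[OF bounded_linear.linear[OF bounded_J]])

text \<open>\<open>V* S = T V*\<close>: the shift weight \<open>sqrt (q (n+1) / q n)\<close> turns the coefficient
  \<open>1 / sqrt (q (n+1))\<close> of \<open>V*\<close> into \<open>1 / sqrt (q n)\<close>.\<close>

lemma embed_adj_weighted_shift:
  assumes "k \<in> l2seq"
  shows "embed_adj (weighted_shift (ratio_weights q) k) = T (embed_adj k)"
proof -
  let ?f = "\<lambda>m. (1 / sqrt (q m)) *\<^sub>R (T ^^ m) (D (weighted_shift (ratio_weights q) k m))"
  have shifted: "?f (Suc n) = T ((1 / sqrt (q n)) *\<^sub>R (T ^^ n) (D (k n)))" for n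
  proof -
    have "1 / sqrt (q (Suc n)) * ratio_weights q n = 1 / sqrt (q n)"
      using q_pos[of n] q_pos[of "Suc n"] by (simp add: ratio_weights_def real_sqrt_divide)
    then show ?thesis
      by (simp add: blinfun.scaleR_right linear_cmul[OF bounded_linear.linear[OF bounded_T_pow]]
          linear_cmul[OF bounded_linear.linear[OF bounded_T]] funpow_swap1)
  qed
  have "(\<lambda>n. ?f (Suc n)) sums T (embed_adj k)"
    unfolding shifted embed_adj_def
    using bounded_linear.sums[OF bounded_T summable_sums[OF embed_adj_summable[OF assms]]] .
  then have "?f sums (T (embed_adj k) + ?f 0)"
    by (rule sums_Suc)
  then show ?thesis
    unfolding embed_adj_def by (simp add: sums_iff)
qed

lemma l2proj_embed:
  assumes "k \<in> l2seq"
  shows "l2proj (range embed) k = embed (embed_adj k)"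
proof (rule l2proj_eqI)
  show "range embed \<subseteq> l2seq"
    using embed_l2seq by blast
  show "(\<lambda>n. m n - m' n) \<in> range embed" if ranges: "m \<in> range embed" "m' \<in> range embed" for m m'
  proof -
    obtain g g' where "m = embed g" "m' = embed g'"
      using ranges by blast
    then have "(\<lambda>n. m n - m' n) = embed (g - g')"
      by (simp add: embed_def linear_diff[OF bounded_linear.linear[OF bounded_A_pow]]
          blinfun.diff_right scaleR_diff_right)
    then show ?thesis
      by simp
  qed
  show "l2inner (\<lambda>n. k n - embed (embed_adj k) n) m = 0" if "m \<in> range embed" for m
  proof -
    obtain g where "m = embed g"
      using \<open>m \<in> range embed\<close> by blast
    then show ?thesis
      using l2inner_diff_left[OF assms embed_l2seq embed_l2seq]
      by (simp add: l2inner_commute[of _ "embed g"] embed_inner[OF assms] embed_inner[OF embed_l2seq]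
          embed_adj_embed inner_commute)
  qed
qed (use assms in auto)

lemma embed_lifting:
  assumes "\<And>n. \<bar>ratio_weights q n\<bar> \<le> K"
  shows "l2_lifting J T embed (weighted_shift (ratio_weights q))"
  unfolding l2_lifting_def
proof (intro conjI allI ballI)
  show "range embed \<subseteq> l2seq"
    using embed_l2seq by blast
  fix k :: "nat \<Rightarrow> 'a" assume k: "k \<in> l2seq"
  have "inj embed"
    by (rule inj_on_inverseI[of _ embed_adj]) (simp add: embed_adj_embed)
  then show "embed (T (inv embed (l2proj (range embed) k))) = l2proj (range embed) (weighted_shift (ratio_weights q) k)"
    using k weighted_shift_l2seq[OF assms k]
    by (simp add: l2proj_embed embed_adj_weighted_shift)
qed (simp_all add: embed_add embed_scaleR embed_J embed_isometric)

theorem weighted_shift_lifting: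
  assumes q_mono: "\<And>n. q n \<le> q (Suc n)" and q_ratio: "\<And>n. q (Suc n) \<le> K * q n"
    and q_third_difference: "\<And>n. q n - 3 * q (n + 1) + 3 * q (n + 2) - q (n + 3) = 0"
  shows "\<exists>V S. l2_operator J S \<and> l2_lifting J T V S \<and> three_isometric S
    \<and> l2_expansive S \<and> l2_analytic S"
proof (intro exI conjI)
  note weights = ratio_weights_bounded[of q, OF q_pos q_ratio]
  show "l2_operator J (weighted_shift (ratio_weights q))"
    by (rule weighted_shift_l2_operator[OF weights bounded_J])
  show "l2_lifting J T embed (weighted_shift (ratio_weights q))"
    by (rule embed_lifting[OF weights])
  show "three_isometric (weighted_shift (ratio_weights q))"
    by (rule weighted_shift_three_isometric[OF q_pos q_ratio q_third_difference])
  show "l2_expansive (weighted_shift (ratio_weights q))"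
    by (rule weighted_shift_l2_expansive[OF weights ratio_weights_ge_1[of q, OF q_pos q_mono]])
  show "l2_analytic (weighted_shift (ratio_weights q))"
    by (rule weighted_shift_l2_analytic)
qed

end

section \<open>Quadratic weights\<close>

definition quadratic_weights :: "real \<Rightarrow> nat \<Rightarrow> real" where
  "quadratic_weights \<kappa> n = 1 + \<kappa> * real n * (real n + 1)"

context
  fixes \<kappa> :: real
  assumes \<kappa>_pos: "0 < \<kappa>"
begin

lemma quadratic_weights_pos: "0 < quadratic_weights \<kappa> n"
  unfolding quadratic_weights_def using \<kappa>_pos by (simp add: add_pos_nonneg)

lemma quadratic_weights_mono: "quadratic_weights \<kappa> n \<le> quadratic_weights \<kappa> (Suc n)"
  unfolding quadratic_weights_def using \<kappa>_pos by (simp add: algebra_simps)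

lemma quadratic_weights_ratio: "quadratic_weights \<kappa> (Suc n) \<le> (3 + 2 * \<kappa>) * quadratic_weights \<kappa> n"
  unfolding quadratic_weights_def using \<kappa>_pos
  by (simp add: algebra_simps)

lemma quadratic_weights_third_difference:
  "quadratic_weights \<kappa> n - 3 * quadratic_weights \<kappa> (n + 1) + 3 * quadratic_weights \<kappa> (n + 2)
    - quadratic_weights \<kappa> (n + 3) = 0"
  unfolding quadratic_weights_def by (simp add: algebra_simps)

text \<open>Compare with the telescoping series \<open>sum_n 1 / ((n + 1) (n + 2)) = 1\<close>.\<close>

lemma quadratic_weights_inverse_sums_le:
  "summable (\<lambda>n. 1 / quadratic_weights \<kappa> n) \<and> (\<Sum>n. 1 / quadratic_weights \<kappa> (Suc n)) \<le> 1 / \<kappa>"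
proof -
  have "(\<lambda>n. 1 / (real n + 1) - 1 / (real (Suc n) + 1)) sums (1 / (real 0 + 1))"
    using telescope_sums'[of "\<lambda>n. 1 / (real n + 1)" 0] LIMSEQ_inverse_real_of_nat
    by (simp add: inverse_eq_divide add.commute)
  then have telescope: "(\<lambda>n. 1 / \<kappa> * (1 / (real n + 1) - 1 / (real (Suc n) + 1))) sums (1 / \<kappa>)"
    using sums_mult[of _ 1 "1 / \<kappa>"] by simp
  have le: "1 / quadratic_weights \<kappa> (Suc n) \<le> 1 / \<kappa> * (1 / (real n + 1) - 1 / (real (Suc n) + 1))" for n
  proof -
    have "\<kappa> * ((real n + 1) * (real n + 2)) \<le> quadratic_weights \<kappa> (Suc n)"
      unfolding quadratic_weights_def by (simp add: algebra_simps)
    then have "1 / quadratic_weights \<kappa> (Suc n) \<le> 1 / (\<kappa> * ((real n + 1) * (real n + 2)))"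
      using \<kappa>_pos quadratic_weights_pos by (intro divide_left_mono) simp_all
    then show ?thesis
      by (simp add: field_simps)
  qed
  have summable: "summable (\<lambda>n. 1 / quadratic_weights \<kappa> (Suc n))"
    by (rule summable_comparison_test'[OF sums_summable[OF telescope]])
      (use le quadratic_weights_pos in \<open>auto simp: less_imp_le\<close>)
  then show ?thesis
    using sums_le[OF le summable_sums[OF summable] telescope] summable_Suc_iff by blast
qed

end

lemma power_bounded_adjoints_of_power_bounded:
  fixes J T :: "'a::{real_inner,complete_space} \<Rightarrow> 'a"
  assumes "complex_structure J" and "complex_bounded_operator J T" and "power_bounded T"
  obtains M where "power_bounded_adjoints J T (hilbert_adjoint T) M"
proof -
  have T: "bounded_linear T" "\<And>x. T (J x) = J (T x)"
    using assms(2) unfolding complex_bounded_operator_def by auto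
  obtain M where M: "\<And>n. onorm (T ^^ n) \<le> M"
    using assms(3) unfolding power_bounded_def bdd_above_def by blast
  have "norm ((T ^^ n) x) \<le> max M 0 * norm x" for n x
    using onorm[OF funpow_bounded_linear[OF T(1)], of n x] M[of n]
    by (meson max.cobounded1 mult_right_mono norm_ge_zero order_trans)
  moreover have "hilbert_adjoint T (J x) = J (hilbert_adjoint T x)" for x
    using adjoint_commute[OF hilbert_adjoint_inner[OF T(1)] complex_structure_skew[OF assms(1)] T(2)] .
  ultimately have "power_bounded_adjoints J T (hilbert_adjoint T) (max M 0)"
    using assms(1) T hilbert_adjoint_inner
    by (intro power_bounded_adjoints.intro) (auto simp: complex_structure_def)
  then show thesis
    using that by blast
qed

lemma (in power_bounded_adjoints) quadratic_weights_defect_equation: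
  defines "\<kappa> \<equiv> 10 * M\<^sup>2 + 1"
  shows "defect_equation J T A M (\<lambda>n. 1 / quadratic_weights \<kappa> n)"
proof (intro defect_equation.intro defect_equation_axioms.intro)
  have \<kappa>: "0 < \<kappa>"
    by (simp add: \<kappa>_def add_nonneg_pos)
  have "M\<^sup>2 * (\<Sum>n. 1 / quadratic_weights \<kappa> (Suc n)) \<le> M\<^sup>2 * (1 / \<kappa>)"
    using quadratic_weights_inverse_sums_le[OF \<kappa>] by (intro mult_left_mono) simp_all
  also have "\<dots> \<le> 1/10"
    using \<kappa> by (simp add: \<kappa>_def field_simps)
  finally show "M\<^sup>2 * (\<Sum>n. 1 / quadratic_weights \<kappa> (Suc n)) \<le> 1/10" .
  show "summable (\<lambda>n. 1 / quadratic_weights \<kappa> n)"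
    using quadratic_weights_inverse_sums_le[OF \<kappa>] by blast
  show "0 \<le> 1 / quadratic_weights \<kappa> n" for n
    using quadratic_weights_pos[OF \<kappa>, of n] by simp
qed (simp_all add: quadratic_weights_def power_bounded_adjoints_axioms)

theorem corollary2p5:
  fixes J :: "'a::{real_inner, complete_space} \<Rightarrow> 'a"
    and T :: "'a \<Rightarrow> 'a"
  assumes "complex_structure J"
    and "complex_bounded_operator J T"
    and "power_bounded T"
  shows "\<exists>V S. l2_operator J S \<and> l2_lifting J T V S \<and> three_isometric S
                \<and> l2_expansive S \<and> l2_analytic S"
proof -
  obtain M where "power_bounded_adjoints J T (hilbert_adjoint T) M"
    using power_bounded_adjoints_of_power_bounded[OF assms] .
  then interpret power_bounded_adjoints J T "hilbert_adjoint T" M .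
  define \<kappa> where "\<kappa> = 10 * M\<^sup>2 + 1"
  have \<kappa>: "0 < \<kappa>"
    by (simp add: \<kappa>_def add_nonneg_pos)
  define q where "q = quadratic_weights \<kappa>"
  interpret defect_equation J T "hilbert_adjoint T" M "\<lambda>n. 1 / q n"
    using quadratic_weights_defect_equation unfolding q_def \<kappa>_def .
  obtain D where "selfadjoint (blinfun_apply D)" "\<And>x. D (J x) = J (D x)"
    "\<And>h. (\<lambda>n. (1 / q n) *\<^sub>R (T ^^ n) (D (D ((hilbert_adjoint T ^^ n) h)))) sums h"
    using defect_operator_exists by blast
  then interpret dilation J T "hilbert_adjoint T" M q D
    using quadratic_weights_pos[OF \<kappa>] quadratic_weights_inverse_sums_le[OF \<kappa>]
    by unfold_locales (simp_all add: q_def)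
  show ?thesis
    using weighted_shift_lifting quadratic_weights_mono[OF \<kappa>] quadratic_weights_ratio[OF \<kappa>]
      quadratic_weights_third_difference[OF \<kappa>]
    unfolding q_def by blast
qed

end
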